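(* Let $M^2$ be a strongly regular minimal surface of general type in $\mathbb R^4$ parameterized by canonical parameters $(u,v)$ (semi-canonical with $E=G=|\mu^2-\nu^2|^{-1/2}$). Then $$\gamma_1=\big(|\mu^2-\nu^2|^{1/4}\big)_v,\quad \gamma_2=\big(|\mu^2-\nu^2|^{1/4}\big)_u,\quad \beta_1=-|\mu^2-\nu^2|^{1/4}\Big(\ln\sqrt{\big|\tfrac{\mu+\nu}{\mu-\nu}\big|}\Big)_v,\quad \beta_2=|\mu^2-\nu^2|^{1/4}\Big(\ln\sqrt{\big|\tfrac{\mu+\nu}{\mu-\nu}\big|}\Big)_u,$$ and the invariants $\mu,\nu$ satisfy $$\tfrac14\sqrt{|\mu^2-\nu^2|}\,\Delta\ln|\mu^2-\nu^2|+\nu^2+\mu^2=0,\qquad \tfrac12\sqrt{|\mu^2-\nu^2|}\,\Delta\ln\Big|\frac{\mu+\nu}{\mu-\nu}\Big|+2\nu\mu=0,$$ where $\Delta=\partial_u^2+\partial_v^2$. Equivalently, in terms of $K$ and $\varkappa$: $\tfrac18(K^2-\varkappa^2)^{1/4}\Delta\ln(K^2-\varkappa^2)-K=0$ and $\tfrac14(K^2-\varkappa^2)^{1/4}\Delta\ln\frac{K-\varkappa}{K+\varkappa}+\varkappa=0$.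
   Context: $\mathbb R^4$ carries the standard metric $g=\langle\cdot,\cdot\rangle$ and flat connection $\nabla'$; everything is smooth and local. For a regular surface $M^2: z=z(u,v)$ let $E,F,G$ be the first fundamental form coefficients, $\sigma$ the second fundamental form, $K$ the Gauss curvature, and $\varkappa$ the curvature of the normal connection, $\varkappa=g(R^\perp(x,y)n_2,n_1)$ for a positively oriented orthonormal frame $(x,y,n_1,n_2)$ with $x,y$ tangent. Minimal means $\sigma(x,x)+\sigma(y,y)=0$ for orthonormal tangent $x,y$. A minimal surface is of general type if $K^2-\varkappa^2>0$ and $\varkappa\neq0$ everywhere. The ellipse of curvature at $p$ is $\{\sigma(v,v): v\in T_pM^2,\ |v|=1\}$; a tangent line is canonical if it is collinear with an axis of this ellipse. The geometric frame is a positively oriented orthonormal frame $\{x,y,n_1,n_2\}$ with $x,y$ canonical tangent fields and $n_1,n_2$ normal, satisfying $\nabla'_xx=\gamma_1y+\nu n_1$, $\nabla'_xy=-\gamma_1x+\mu n_2$, $\nabla'_yx=-\gamma_2y+\mu n_2$, $\nabla'_yy=\gamma_2x-\nu n_1$, $\nabla'_xn_1=-\nu x+\beta_1n_2$, $\nabla'_yn_1=\nu y+\beta_2n_2$, $\nabla'_xn_2=-\mu y-\beta_1n_1$, $\nabla'_yn_2=-\mu x-\beta_2n_1$, with $\mu>0$, $\nu\ne0$, $\mu^2\ne\nu^2$; the functions $\nu,\mu,\gamma_1,\gamma_2,\beta_1,\beta_2$ are the invariants of $M^2$ (and $K=-(\mu^2+\nu^2)$, $\varkappa=2\nu\mu$).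 Parameters $(u,v)$ are semi-canonical if the parametric lines are integral curves of the canonical tangents, with $F=0$, $x=z_u/\sqrt E$, $y=z_v/\sqrt G$; then $\gamma_1=-y(\ln\sqrt E)$, $\gamma_2=-x(\ln\sqrt G)$. A minimal surface of general type is strongly regular if $\gamma_1\gamma_2\neq0$ everywhere. *)

theory Defs
  imports "HOL-Analysis.Analysis"
begin

text \<open>Parameter domain: an open subset U of the (u,v)-plane, points are pairs (u,v).
  Surfaces and vector fields along them are maps into real^4 (standard metric = inner product).\<close>

definition pu :: "(real \<times> real \<Rightarrow> 'a::real_normed_vector) \<Rightarrow> real \<times> real \<Rightarrow> 'a" where
  "pu f p = vector_derivative (\<lambda>t. f (t, snd p)) (at (fst p))"

definition pv :: "(real \<times> real \<Rightarrow> 'a::real_normed_vector) \<Rightarrow> real \<times> real \<Rightarrow> 'a" where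
  "pv f p = vector_derivative (\<lambda>t. f (fst p, t)) (at (snd p))"

definition lap :: "(real \<times> real \<Rightarrow> real) \<Rightarrow> real \<times> real \<Rightarrow> real" where
  "lap f p = pu (pu f) p + pv (pv f) p"

text \<open>Iterated partial derivatives (False = d/du, True = d/dv).\<close>
fun iterpart :: "bool list \<Rightarrow> (real \<times> real \<Rightarrow> 'a::real_normed_vector) \<Rightarrow> real \<times> real \<Rightarrow> 'a" where
  "iterpart [] f = f"
| "iterpart (d # ds) f = (if d then pv (iterpart ds f) else pu (iterpart ds f))"

definition smooth2 :: "(real \<times> real) set \<Rightarrow> (real \<times> real \<Rightarrow> 'a::real_normed_vector) \<Rightarrow> bool" where
  "smooth2 U f \<longleftrightarrow> (\<forall>ds. continuous_on U (iterpart ds f) \<and>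
     (\<forall>p\<in>U. (\<lambda>t. iterpart ds f (t, snd p)) differentiable (at (fst p)) \<and>
             (\<lambda>t. iterpart ds f (fst p, t)) differentiable (at (snd p))))"

definition fE :: "(real \<times> real \<Rightarrow> real^4) \<Rightarrow> real \<times> real \<Rightarrow> real" where
  "fE z p = pu z p \<bullet> pu z p"
definition fF :: "(real \<times> real \<Rightarrow> real^4) \<Rightarrow> real \<times> real \<Rightarrow> real" where
  "fF z p = pu z p \<bullet> pv z p"
definition fG :: "(real \<times> real \<Rightarrow> real^4) \<Rightarrow> real \<times> real \<Rightarrow> real" where
  "fG z p = pv z p \<bullet> pv z p"

text \<open>Coordinates (a,b) of the tangential part a z_u + b z_v of a vector w.\<close>
definition tca :: "(real \<times> real \<Rightarrow> real^4) \<Rightarrow> real \<times> real \<Rightarrow> real^4 \<Rightarrow> real" where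
  "tca z p w = (fG z p * (w \<bullet> pu z p) - fF z p * (w \<bullet> pv z p)) / (fE z p * fG z p - (fF z p)\<^sup>2)"
definition tcb :: "(real \<times> real \<Rightarrow> real^4) \<Rightarrow> real \<times> real \<Rightarrow> real^4 \<Rightarrow> real" where
  "tcb z p w = (fE z p * (w \<bullet> pv z p) - fF z p * (w \<bullet> pu z p)) / (fE z p * fG z p - (fF z p)\<^sup>2)"

definition tproj :: "(real \<times> real \<Rightarrow> real^4) \<Rightarrow> real \<times> real \<Rightarrow> real^4 \<Rightarrow> real^4" where
  "tproj z p w = tca z p w *\<^sub>R pu z p + tcb z p w *\<^sub>R pv z p"
definition nproj :: "(real \<times> real \<Rightarrow> real^4) \<Rightarrow> real \<times> real \<Rightarrow> real^4 \<Rightarrow> real^4" where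
  "nproj z p w = w - tproj z p w"

text \<open>Flat connection: derivative of the field X (along the surface) in the direction of
  the tangent field w, i.e. nabla'_w X = a X_u + b X_v where w = a z_u + b z_v.\<close>
definition Dflat :: "(real \<times> real \<Rightarrow> real^4) \<Rightarrow> (real \<times> real \<Rightarrow> real^4) \<Rightarrow> (real \<times> real \<Rightarrow> real^4)
    \<Rightarrow> real \<times> real \<Rightarrow> real^4" where
  "Dflat z w X p = tca z p (w p) *\<^sub>R pu X p + tcb z p (w p) *\<^sub>R pv X p"

text \<open>Second fundamental form on coordinate fields and Gauss curvature
  K = (<sigma(z_u,z_u),sigma(z_v,z_v)> - |sigma(z_u,z_v)|^2)/(EG-F^2) (Gauss equation).\<close>
definition gauss_curv :: "(real \<times> real \<Rightarrow> real^4) \<Rightarrow> real \<times> real \<Rightarrow> real" where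
  "gauss_curv z p =
     (nproj z p (pu (pu z) p) \<bullet> nproj z p (pv (pv z) p)
      - nproj z p (pu (pv z) p) \<bullet> nproj z p (pu (pv z) p))
     / (fE z p * fG z p - (fF z p)\<^sup>2)"

definition Dnu :: "(real \<times> real \<Rightarrow> real^4) \<Rightarrow> (real \<times> real \<Rightarrow> real^4) \<Rightarrow> real \<times> real \<Rightarrow> real^4" where
  "Dnu z \<xi> p = nproj z p (pu \<xi> p)"
definition Dnv :: "(real \<times> real \<Rightarrow> real^4) \<Rightarrow> (real \<times> real \<Rightarrow> real^4) \<Rightarrow> real \<times> real \<Rightarrow> real^4" where
  "Dnv z \<xi> p = nproj z p (pv \<xi> p)"

text \<open>Curvature of the normal connection kappa = g(R^perp(x,y) n2, n1) for an orthonormal tangent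
  pair (x,y) with the orientation of (z_u,z_v):
  R^perp(d_u,d_v) = sqrt(EG-F^2) R^perp(x,y), coordinate fields commute.\<close>
definition normal_curv :: "(real \<times> real \<Rightarrow> real^4) \<Rightarrow> (real \<times> real \<Rightarrow> real^4) \<Rightarrow> (real \<times> real \<Rightarrow> real^4)
    \<Rightarrow> real \<times> real \<Rightarrow> real" where
  "normal_curv z n1 n2 p =
     ((Dnu z (Dnv z n2) p - Dnv z (Dnu z n2) p) \<bullet> n1 p) / sqrt (fE z p * fG z p - (fF z p)\<^sup>2)"

definition geometric_frame ::
  "(real \<times> real) set \<Rightarrow> (real \<times> real \<Rightarrow> real^4) \<Rightarrow>
   (real \<times> real \<Rightarrow> real^4) \<Rightarrow> (real \<times> real \<Rightarrow> real^4) \<Rightarrow> (real \<times> real \<Rightarrow> real^4) \<Rightarrow> (real \<times> real \<Rightarrow> real^4) \<Rightarrow>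
   (real \<times> real \<Rightarrow> real) \<Rightarrow> (real \<times> real \<Rightarrow> real) \<Rightarrow> (real \<times> real \<Rightarrow> real) \<Rightarrow>
   (real \<times> real \<Rightarrow> real) \<Rightarrow> (real \<times> real \<Rightarrow> real) \<Rightarrow> (real \<times> real \<Rightarrow> real) \<Rightarrow> bool" where
  "geometric_frame U z x y n1 n2 \<nu> \<mu> \<gamma>1 \<gamma>2 \<beta>1 \<beta>2 \<longleftrightarrow>
    smooth2 U x \<and> smooth2 U y \<and> smooth2 U n1 \<and> smooth2 U n2 \<and>
    smooth2 U \<nu> \<and> smooth2 U \<mu> \<and> smooth2 U \<gamma>1 \<and> smooth2 U \<gamma>2 \<and> smooth2 U \<beta>1 \<and> smooth2 U \<beta>2 \<and>
    (\<forall>p\<in>U.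
      \<comment> \<open>orthonormal, positively oriented\<close>
      x p \<bullet> x p = 1 \<and> y p \<bullet> y p = 1 \<and> n1 p \<bullet> n1 p = 1 \<and> n2 p \<bullet> n2 p = 1 \<and>
      x p \<bullet> y p = 0 \<and> x p \<bullet> n1 p = 0 \<and> x p \<bullet> n2 p = 0 \<and>
      y p \<bullet> n1 p = 0 \<and> y p \<bullet> n2 p = 0 \<and> n1 p \<bullet> n2 p = 0 \<and>
      det (vector [x p, y p, n1 p, n2 p] :: real^4^4) > 0 \<and>
      \<comment> \<open>x, y tangent; n1, n2 normal\<close>
      tproj z p (x p) = x p \<and> tproj z p (y p) = y p \<and>
      n1 p \<bullet> pu z p = 0 \<and> n1 p \<bullet> pv z p = 0 \<and> n2 p \<bullet> pu z p = 0 \<and> n2 p \<bullet> pv z p = 0 \<and>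
      \<comment> \<open>structure (Frenet-type) equations\<close>
      Dflat z x x p = \<gamma>1 p *\<^sub>R y p + \<nu> p *\<^sub>R n1 p \<and>
      Dflat z x y p = - \<gamma>1 p *\<^sub>R x p + \<mu> p *\<^sub>R n2 p \<and>
      Dflat z y x p = - \<gamma>2 p *\<^sub>R y p + \<mu> p *\<^sub>R n2 p \<and>
      Dflat z y y p = \<gamma>2 p *\<^sub>R x p - \<nu> p *\<^sub>R n1 p \<and>
      Dflat z x n1 p = - \<nu> p *\<^sub>R x p + \<beta>1 p *\<^sub>R n2 p \<and>
      Dflat z y n1 p = \<nu> p *\<^sub>R y p + \<beta>2 p *\<^sub>R n2 p \<and>
      Dflat z x n2 p = - \<mu> p *\<^sub>R y p - \<beta>1 p *\<^sub>R n1 p \<and>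
      Dflat z y n2 p = - \<mu> p *\<^sub>R x p - \<beta>2 p *\<^sub>R n1 p \<and>
      \<mu> p > 0 \<and> \<nu> p \<noteq> 0 \<and> (\<mu> p)\<^sup>2 \<noteq> (\<nu> p)\<^sup>2)"

definition regular_surface :: "(real \<times> real) set \<Rightarrow> (real \<times> real \<Rightarrow> real^4) \<Rightarrow> bool" where
  "regular_surface U z \<longleftrightarrow> open U \<and> smooth2 U z \<and>
     (\<forall>p\<in>U. fE z p * fG z p - (fF z p)\<^sup>2 > 0)"

definition semi_canonical :: "(real \<times> real) set \<Rightarrow> (real \<times> real \<Rightarrow> real^4) \<Rightarrow>
   (real \<times> real \<Rightarrow> real^4) \<Rightarrow> (real \<times> real \<Rightarrow> real^4) \<Rightarrow> bool" where
  "semi_canonical U z x y \<longleftrightarrow>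
     (\<forall>p\<in>U. fF z p = 0 \<and> x p = (1 / sqrt (fE z p)) *\<^sub>R pu z p \<and> y p = (1 / sqrt (fG z p)) *\<^sub>R pv z p)"

definition canonical_params :: "(real \<times> real) set \<Rightarrow> (real \<times> real \<Rightarrow> real^4) \<Rightarrow>
   (real \<times> real \<Rightarrow> real^4) \<Rightarrow> (real \<times> real \<Rightarrow> real^4) \<Rightarrow>
   (real \<times> real \<Rightarrow> real) \<Rightarrow> (real \<times> real \<Rightarrow> real) \<Rightarrow> bool" where
  "canonical_params U z x y \<nu> \<mu> \<longleftrightarrow> semi_canonical U z x y \<and>
     (\<forall>p\<in>U. fE z p = \<bar>(\<mu> p)\<^sup>2 - (\<nu> p)\<^sup>2\<bar> powr (-1/2) \<and> fG z p = \<bar>(\<mu> p)\<^sup>2 - (\<nu> p)\<^sup>2\<bar> powr (-1/2))"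

end

theory Submission
  imports Defs
begin

text \<open>
  Write disc = |mu^2 - nu^2| and ratio = (mu + nu)/(mu - nu).  In canonical parameters
  z_u = conf x and z_v = conf y with conf = disc^(-1/4), and the structure equations of the
  geometric frame say that the partials of x, y, n1, n2 are conf times explicit combinations of
  the frame.  The proof has three layers.
  (1) Calculus along coordinate lines: derivatives of compositions (has_deriv_along), locality
      of partial derivatives on open sets, and symmetry of mixed partials of smooth maps
      (Schwarz), proved from the mean value theorem.
  (2) Integrability: comparing components of z_uv = z_vu gives conf_v = -conf^2 gamma1 and
      conf_u = -conf^2 gamma2; comparing components of x_uv = x_vu, y_uv = y_vu, n1_uv = n1_vu gives
      the Codazzi equations (first partials of nu, mu), the Gauss equation and the Ricci
      equation; the latter two also give K = -(nu^2 + mu^2) and kappa = 2 nu mu.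
  (3) The Codazzi equations turn into (ln disc)_u = 4 conf gamma2, (ln disc)_v = 4 conf gamma1,
      (ln |ratio|)_u = 2 conf beta2, (ln |ratio|)_v = -2 conf beta1; differentiating once more,
      the Gauss and Ricci equations become the two Laplacian equations, and
      K^2 - kappa^2 = disc^2, (K - kappa)/(K + kappa) = ratio^2 give their curvature forms.
\<close>

definition has_deriv_along ::
    "(real \<Rightarrow> real \<times> real) \<Rightarrow> (real \<times> real \<Rightarrow> 'a::real_normed_vector) \<Rightarrow> 'a \<Rightarrow> real \<Rightarrow> bool" where
  "has_deriv_along l f d t \<longleftrightarrow> ((\<lambda>s. f (l s)) has_vector_derivative d) (at t)"

abbreviation has_pu :: "(real \<times> real \<Rightarrow> 'a::real_normed_vector) \<Rightarrow> 'a \<Rightarrow> real \<times> real \<Rightarrow> bool" where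
  "has_pu f d p \<equiv> has_deriv_along (\<lambda>t. (t, snd p)) f d (fst p)"

abbreviation has_pv :: "(real \<times> real \<Rightarrow> 'a::real_normed_vector) \<Rightarrow> 'a \<Rightarrow> real \<times> real \<Rightarrow> bool" where
  "has_pv f d p \<equiv> has_deriv_along (\<lambda>t. (fst p, t)) f d (snd p)"

lemma pu_eqI: "has_pu f d p \<Longrightarrow> pu f p = d"
  unfolding has_deriv_along_def pu_def by (rule vector_derivative_at)

lemma pv_eqI: "has_pv f d p \<Longrightarrow> pv f p = d"
  unfolding has_deriv_along_def pv_def by (rule vector_derivative_at)

lemma has_deriv_along_real:
  "has_deriv_along l (f :: _ \<Rightarrow> real) a t \<longleftrightarrow> ((\<lambda>s. f (l s)) has_real_derivative a) (at t)"
  unfolding has_deriv_along_def by (simp add: has_real_derivative_iff_has_vector_derivative)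

lemma has_deriv_along_const: "has_deriv_along l (\<lambda>q. c) 0 t"
  unfolding has_deriv_along_def by (rule has_vector_derivative_const)

lemma has_deriv_along_add:
  "has_deriv_along l f a t \<Longrightarrow> has_deriv_along l g b t \<Longrightarrow> has_deriv_along l (\<lambda>q. f q + g q) (a + b) t"
  unfolding has_deriv_along_def by (rule has_vector_derivative_add)

lemma has_deriv_along_diff:
  "has_deriv_along l f a t \<Longrightarrow> has_deriv_along l g b t \<Longrightarrow> has_deriv_along l (\<lambda>q. f q - g q) (a - b) t"
  unfolding has_deriv_along_def by (rule has_vector_derivative_diff)

lemma has_deriv_along_minus: "has_deriv_along l f a t \<Longrightarrow> has_deriv_along l (\<lambda>q. - f q) (- a) t"
  unfolding has_deriv_along_def by (rule has_vector_derivative_minus)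

lemma has_deriv_along_scaleR:
  "has_deriv_along l f a t \<Longrightarrow> has_deriv_along l g b t \<Longrightarrow>
   has_deriv_along l (\<lambda>q. f q *\<^sub>R g q) (f (l t) *\<^sub>R b + a *\<^sub>R g (l t)) t"
  unfolding has_deriv_along_def
  by (rule has_vector_derivative_scaleR) (simp_all add: has_real_derivative_iff_has_vector_derivative)

lemma has_deriv_along_mult:
  "has_deriv_along l (f :: _ \<Rightarrow> real) a t \<Longrightarrow> has_deriv_along l g b t \<Longrightarrow>
   has_deriv_along l (\<lambda>q. f q * g q) (f (l t) * b + a * g (l t)) t"
  using has_deriv_along_scaleR[of l f a t g b] by simp

lemma has_deriv_along_inner:
  "has_deriv_along l f a t \<Longrightarrow> has_deriv_along l g b t \<Longrightarrow>
   has_deriv_along l (\<lambda>q. f q \<bullet> g q) (f (l t) \<bullet> b + a \<bullet> g (l t)) t"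
  unfolding has_deriv_along_def by (rule bounded_bilinear.has_vector_derivative[OF bounded_bilinear_inner])

lemma has_deriv_along_inverse:
  "has_deriv_along l (f :: _ \<Rightarrow> real) a t \<Longrightarrow> f (l t) \<noteq> 0 \<Longrightarrow>
   has_deriv_along l (\<lambda>q. 1 / f q) (- a / (f (l t))\<^sup>2) t"
  unfolding has_deriv_along_real by (auto intro!: derivative_eq_intros simp: power2_eq_square)

lemma has_deriv_along_divide:
  "has_deriv_along l (f :: _ \<Rightarrow> real) a t \<Longrightarrow> has_deriv_along l g b t \<Longrightarrow> g (l t) \<noteq> 0 \<Longrightarrow>
   has_deriv_along l (\<lambda>q. f q / g q) ((a * g (l t) - f (l t) * b) / (g (l t))\<^sup>2) t"
  unfolding has_deriv_along_real by (drule DERIV_divide) (auto simp: power2_eq_square)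

lemma has_deriv_along_sqrt:
  "has_deriv_along l (f :: _ \<Rightarrow> real) a t \<Longrightarrow> f (l t) > 0 \<Longrightarrow>
   has_deriv_along l (\<lambda>q. sqrt (f q)) (a / (2 * sqrt (f (l t)))) t"
  unfolding has_deriv_along_real by (auto intro!: derivative_eq_intros simp: field_simps)

text \<open>Logarithmic derivative: away from zeros, (ln |f|)' = f' / f; we differentiate
  ln |f| = ln (f^2) / 2, which avoids a case split on the sign of f.\<close>
lemma has_deriv_along_ln_abs:
  assumes f: "has_deriv_along l (f :: _ \<Rightarrow> real) a t" and nz: "f (l t) \<noteq> 0"
  shows "has_deriv_along l (\<lambda>q. ln \<bar>f q\<bar>) (a / f (l t)) t"
proof -
  have half: "ln \<bar>r\<bar> = ln (r\<^sup>2) / 2" for r :: real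
    using ln_realpow[of "\<bar>r\<bar>" 2] by simp
  have "f (l t) * f (l t) > 0" using nz by (auto simp: zero_less_mult_iff linorder_neq_iff)
  then have "((\<lambda>s. ln ((f (l s))\<^sup>2) / 2) has_real_derivative a / f (l t)) (at t)"
    using f nz unfolding has_deriv_along_real
    by (auto intro!: derivative_eq_intros simp: power2_eq_square field_simps)
  then show ?thesis unfolding has_deriv_along_real half .
qed

lemma has_deriv_along_power2:
  "has_deriv_along l (f :: _ \<Rightarrow> real) a t \<Longrightarrow> has_deriv_along l (\<lambda>q. (f q)\<^sup>2) (2 * f (l t) * a) t"
  using has_deriv_along_mult[of l f a t f a] by (simp add: power2_eq_square mult_ac)

lemma has_deriv_along_ln_diff_squares:
  assumes m: "has_deriv_along l (m :: _ \<Rightarrow> real) a t" and n: "has_deriv_along l n b t"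
    and mn: "(m (l t))\<^sup>2 \<noteq> (n (l t))\<^sup>2"
  shows "has_deriv_along l (\<lambda>q. ln \<bar>(m q)\<^sup>2 - (n q)\<^sup>2\<bar>)
           (2 * (m (l t) * a - n (l t) * b) / ((m (l t))\<^sup>2 - (n (l t))\<^sup>2)) t"
  using has_deriv_along_ln_abs[OF has_deriv_along_diff[OF has_deriv_along_power2[OF m] has_deriv_along_power2[OF n]]] mn
  by (simp add: algebra_simps)

lemma has_deriv_along_ln_ratio:
  assumes m: "has_deriv_along l (m :: _ \<Rightarrow> real) a t" and n: "has_deriv_along l n b t"
    and mn: "(m (l t))\<^sup>2 \<noteq> (n (l t))\<^sup>2"
  shows "has_deriv_along l (\<lambda>q. ln \<bar>(m q + n q) / (m q - n q)\<bar>)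
           (2 * (b * m (l t) - a * n (l t)) / ((m (l t))\<^sup>2 - (n (l t))\<^sup>2)) t"
proof -
  define M N where "M = m (l t)" and "N = n (l t)"
  have nz: "M + N \<noteq> 0" "M - N \<noteq> 0"
    using mn unfolding M_def N_def by (auto simp: power2_eq_square add_eq_0_iff)
  have "(((a + b) * (M - N) - (M + N) * (a - b)) / (M - N)\<^sup>2) / ((M + N) / (M - N))
        = 2 * (b * M - a * N) / (M\<^sup>2 - N\<^sup>2)"
  proof -
    have "M\<^sup>2 - N\<^sup>2 = (M + N) * (M - N)" "(a + b) * (M - N) - (M + N) * (a - b) = 2 * (b * M - a * N)"
      by (simp_all add: power2_eq_square algebra_simps)
    then show ?thesis using nz by (simp add: power2_eq_square)
  qed
  then show ?thesis
    using has_deriv_along_ln_abs[OF has_deriv_along_divide[OF has_deriv_along_add[OF m n] has_deriv_along_diff[OF m n]]] nz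
    unfolding M_def N_def by simp
qed

lemma pu_cong_open:
  assumes U: "open U" and p: "p \<in> U" and fg: "\<And>r. r \<in> U \<Longrightarrow> f r = g r"
  shows "pu f p = pu g p"
proof -
  have "open ((\<lambda>t. (t, snd p)) -` U)"
    by (rule open_vimage[OF U]) (auto intro!: continuous_intros)
  then have "eventually (\<lambda>t. (t, snd p) \<in> U) (nhds (fst p))"
    using p eventually_nhds_in_open by fastforce
  then show ?thesis unfolding pu_def
    by (intro vector_derivative_cong_eq) (auto simp: p fg elim!: eventually_mono)
qed

lemma pv_cong_open:
  assumes U: "open U" and p: "p \<in> U" and fg: "\<And>r. r \<in> U \<Longrightarrow> f r = g r"
  shows "pv f p = pv g p"
proof -
  have "open ((\<lambda>t. (fst p, t)) -` U)"
    by (rule open_vimage[OF U]) (auto intro!: continuous_intros)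
  then have "eventually (\<lambda>t. (fst p, t) \<in> U) (nhds (snd p))"
    using p eventually_nhds_in_open by fastforce
  then show ?thesis unfolding pv_def
    by (intro vector_derivative_cong_eq) (auto simp: p fg elim!: eventually_mono)
qed

lemma iterpart_pu: "iterpart ds (pu f) = iterpart (ds @ [False]) f"
  by (induction ds) auto

lemma iterpart_pv: "iterpart ds (pv f) = iterpart (ds @ [True]) f"
  by (induction ds) auto

lemma smooth2_pu: "smooth2 U f \<Longrightarrow> smooth2 U (pu f)"
  unfolding smooth2_def iterpart_pu by blast

lemma smooth2_pv: "smooth2 U f \<Longrightarrow> smooth2 U (pv f)"
  unfolding smooth2_def iterpart_pv by blast

lemma smooth2_continuous_on: "smooth2 U f \<Longrightarrow> continuous_on U f"
  unfolding smooth2_def by (metis iterpart.simps(1))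

lemma smooth2_has_pu: "smooth2 U f \<Longrightarrow> p \<in> U \<Longrightarrow> has_pu f (pu f p) p"
  unfolding smooth2_def has_deriv_along_def pu_def
  by (metis iterpart.simps(1) vector_derivative_works)

lemma smooth2_has_pv: "smooth2 U f \<Longrightarrow> p \<in> U \<Longrightarrow> has_pv f (pv f p) p"
  unfolding smooth2_def has_deriv_along_def pv_def
  by (metis iterpart.simps(1) vector_derivative_works)

lemma smooth2_inner_partials:
  assumes g: "smooth2 U g" and st: "(s, t) \<in> U"
  shows "((\<lambda>s. g (s, t) \<bullet> w) has_real_derivative pu g (s, t) \<bullet> w) (at s)"
    "((\<lambda>t. g (s, t) \<bullet> w) has_real_derivative pv g (s, t) \<bullet> w) (at t)"
  using has_deriv_along_inner[OF smooth2_has_pu[OF g st] has_deriv_along_const]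
    has_deriv_along_inner[OF smooth2_has_pv[OF g st] has_deriv_along_const]
  by (simp_all add: has_deriv_along_real)

lemma square_in_ball:
  assumes "r > 0" "s \<in> {a..a + r/2}" "t \<in> {b..b + r/2}"
  shows "dist (s, t) (a, b) < r"
proof -
  have "(s - a)\<^sup>2 + (t - b)\<^sup>2 \<le> (r/2)\<^sup>2 + (r/2)\<^sup>2" using assms by (intro add_mono power_mono) auto
  also have "\<dots> < r\<^sup>2" using assms by (simp add: power2_eq_square)
  finally have "sqrt ((s - a)\<^sup>2 + (t - b)\<^sup>2) < r"
    using assms real_sqrt_less_mono real_sqrt_abs by fastforce
  then show ?thesis by (simp add: dist_Pair_Pair dist_real_def)
qed

text \<open>The mixed second difference of F over a square of side h, computed by the mean value theorem
  in the two possible orders: it is h^2 F_uv at one point and h^2 F_vu at another point of the square.\<close>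
lemma mixed_difference_mvt:
  fixes F Fu Fv Fuv Fvu :: "real \<times> real \<Rightarrow> real"
  assumes h: "0 < h"
    and square: "\<And>s t. s \<in> {a..a+h} \<Longrightarrow> t \<in> {b..b+h} \<Longrightarrow> (s, t) \<in> S"
    and Fu: "\<And>s t. (s, t) \<in> S \<Longrightarrow> ((\<lambda>s. F (s, t)) has_real_derivative Fu (s, t)) (at s)"
    and Fv: "\<And>s t. (s, t) \<in> S \<Longrightarrow> ((\<lambda>t. F (s, t)) has_real_derivative Fv (s, t)) (at t)"
    and Fuv: "\<And>s t. (s, t) \<in> S \<Longrightarrow> ((\<lambda>t. Fu (s, t)) has_real_derivative Fuv (s, t)) (at t)"
    and Fvu: "\<And>s t. (s, t) \<in> S \<Longrightarrow> ((\<lambda>s. Fv (s, t)) has_real_derivative Fvu (s, t)) (at s)"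
  obtains \<xi> \<eta> \<xi>' \<eta>' where "\<xi> \<in> {a<..<a+h}" "\<eta> \<in> {b<..<b+h}" "\<xi>' \<in> {a<..<a+h}" "\<eta>' \<in> {b<..<b+h}"
    and "Fuv (\<xi>, \<eta>) = Fvu (\<xi>', \<eta>')"
proof -
  have ab: "a < a + h" "b < b + h" using h by auto
  define \<Delta> where "\<Delta> = F (a + h, b + h) - F (a + h, b) - F (a, b + h) + F (a, b)"
  obtain \<xi> where \<xi>: "a < \<xi>" "\<xi> < a + h"
    and "\<Delta> = h * (Fu (\<xi>, b + h) - Fu (\<xi>, b))"
    using MVT2[OF ab(1), of "\<lambda>s. F (s, b + h) - F (s, b)" "\<lambda>s. Fu (s, b + h) - Fu (s, b)"]
      DERIV_diff[OF Fu Fu] square h unfolding \<Delta>_def by (auto simp: algebra_simps)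
  moreover obtain \<eta> where \<eta>: "b < \<eta>" "\<eta> < b + h" and "Fu (\<xi>, b + h) - Fu (\<xi>, b) = h * Fuv (\<xi>, \<eta>)"
    using MVT2[OF ab(2), of "\<lambda>t. Fu (\<xi>, t)" "\<lambda>t. Fuv (\<xi>, t)"] Fuv square \<xi> by auto
  moreover obtain \<eta>' where \<eta>': "b < \<eta>'" "\<eta>' < b + h"
    and "\<Delta> = h * (Fv (a + h, \<eta>') - Fv (a, \<eta>'))"
    using MVT2[OF ab(2), of "\<lambda>t. F (a + h, t) - F (a, t)" "\<lambda>t. Fv (a + h, t) - Fv (a, t)"]
      DERIV_diff[OF Fv Fv] square h unfolding \<Delta>_def by (auto simp: algebra_simps)
  moreover obtain \<xi>' where \<xi>': "a < \<xi>'" "\<xi>' < a + h" and "Fv (a + h, \<eta>') - Fv (a, \<eta>') = h * Fvu (\<xi>', \<eta>')"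
    using MVT2[OF ab(1), of "\<lambda>s. Fv (s, \<eta>')" "\<lambda>s. Fvu (s, \<eta>')"] Fvu square \<eta>' by auto
  ultimately have "h * (h * Fuv (\<xi>, \<eta>)) = h * (h * Fvu (\<xi>', \<eta>'))" by simp
  then show ?thesis using that \<xi> \<eta> \<xi>' \<eta>' h by simp
qed

text \<open>Symmetry of mixed partial derivatives (Schwarz) for smooth maps into an inner product space:
  otherwise the component along w = f_uv - f_vu would violate the previous lemma near p.\<close>
lemma smooth2_mixed_partials:
  fixes f :: "real \<times> real \<Rightarrow> 'a::real_inner"
  assumes U: "open U" and p: "p \<in> U" and f: "smooth2 U f"
  shows "pv (pu f) p = pu (pv f) p"
proof (rule ccontr)
  assume ne: "pv (pu f) p \<noteq> pu (pv f) p"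
  define w where "w = pv (pu f) p - pu (pv f) p"
  define A where "A q = pv (pu f) q \<bullet> w" for q
  define B where "B q = pu (pv f) q \<bullet> w" for q
  define d where "d = A p - B p"
  have d: "d > 0" using ne unfolding d_def A_def B_def w_def by (simp flip: inner_diff_left)
  have fu: "smooth2 U (pu f)" and fv: "smooth2 U (pv f)" using f by (auto intro: smooth2_pu smooth2_pv)
  have "isCont (pv (pu f)) p" "isCont (pu (pv f)) p"
    using U p smooth2_continuous_on[OF smooth2_pv[OF fu]] smooth2_continuous_on[OF smooth2_pu[OF fv]]
    by (auto simp: continuous_on_eq_continuous_at)
  then have "isCont A p" "isCont B p" unfolding A_def B_def by (auto intro!: continuous_intros)
  then have "(A \<longlongrightarrow> A p) (nhds p)" "(B \<longlongrightarrow> B p) (nhds p)"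
    by (simp_all add: isCont_def tendsto_at_iff_tendsto_nhds)
  moreover have "d/3 > 0" using d by simp
  ultimately have "eventually (\<lambda>q. dist (A q) (A p) < d/3 \<and> dist (B q) (B p) < d/3 \<and> q \<in> U) (nhds p)"
    using U p by (intro eventually_conj tendstoD eventually_nhds_in_open)
  then obtain r where r: "r > 0"
    and near: "\<And>q. dist q p < r \<Longrightarrow> dist (A q) (A p) < d/3 \<and> dist (B q) (B p) < d/3 \<and> q \<in> U"
    unfolding eventually_nhds_metric by (auto simp: dist_commute)
  obtain a b where ab: "p = (a, b)" by (cases p)
  define h where "h = r / 2"
  have square: "dist (s, t) p < r" if "s \<in> {a..a+h}" "t \<in> {b..b+h}" for s t
    using square_in_ball[OF r] that unfolding ab h_def by blast
  let ?S = "{q. dist q p < r}"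
  have inU: "q \<in> U" if "q \<in> ?S" for q using near that by simp
  obtain \<xi> \<eta> \<xi>' \<eta>' where pts: "\<xi> \<in> {a<..<a+h}" "\<eta> \<in> {b<..<b+h}" "\<xi>' \<in> {a<..<a+h}" "\<eta>' \<in> {b<..<b+h}"
    and eq: "A (\<xi>, \<eta>) = B (\<xi>', \<eta>')"
  proof (rule mixed_difference_mvt[of h a b ?S "\<lambda>q. f q \<bullet> w" "\<lambda>q. pu f q \<bullet> w" "\<lambda>q. pv f q \<bullet> w" A B])
    show "0 < h" using r by (simp add: h_def)
  qed (use square inU smooth2_inner_partials[OF f] smooth2_inner_partials[OF fu]
      smooth2_inner_partials[OF fv] in \<open>auto simp: A_def B_def\<close>)
  have "dist (A (\<xi>, \<eta>)) (A p) < d/3" "dist (B (\<xi>', \<eta>')) (B p) < d/3"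
    using near square pts by auto
  then show False using eq d unfolding d_def dist_real_def abs_less_iff by (elim conjE) (simp add: field_simps)
qed

text \<open>A regular surface with geometric frame in canonical parameters.\<close>
locale canonical_minimal_surface =
  fixes U :: "(real \<times> real) set"
    and z x y n1 n2 :: "real \<times> real \<Rightarrow> real^4"
    and \<nu> \<mu> \<gamma>1 \<gamma>2 \<beta>1 \<beta>2 :: "real \<times> real \<Rightarrow> real"
  assumes surf: "regular_surface U z"
    and frame: "geometric_frame U z x y n1 n2 \<nu> \<mu> \<gamma>1 \<gamma>2 \<beta>1 \<beta>2"
    and canon: "canonical_params U z x y \<nu> \<mu>"
begin

abbreviation disc :: "real \<times> real \<Rightarrow> real" where
  "disc q \<equiv> \<bar>(\<mu> q)\<^sup>2 - (\<nu> q)\<^sup>2\<bar>"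

abbreviation ratio :: "real \<times> real \<Rightarrow> real" where
  "ratio q \<equiv> (\<mu> q + \<nu> q) / (\<mu> q - \<nu> q)"

definition conf :: "real \<times> real \<Rightarrow> real" where
  "conf q = sqrt (fE z q)"

lemma open_U: "open U"
  using surf unfolding regular_surface_def by simp

lemma smooth_z: "smooth2 U z"
  using surf unfolding regular_surface_def by simp

lemma smooth_frame: "smooth2 U x" "smooth2 U y" "smooth2 U n1" "smooth2 U n2"
  and smooth_invariants: "smooth2 U \<nu>" "smooth2 U \<mu>" "smooth2 U \<gamma>1" "smooth2 U \<gamma>2" "smooth2 U \<beta>1" "smooth2 U \<beta>2"
  using frame unfolding geometric_frame_def by auto

lemma frame_orthonormal:
  assumes "q \<in> U"
  shows "x q \<bullet> x q = 1" "y q \<bullet> y q = 1" "n1 q \<bullet> n1 q = 1" "n2 q \<bullet> n2 q = 1"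
    "x q \<bullet> y q = 0" "x q \<bullet> n1 q = 0" "x q \<bullet> n2 q = 0"
    "y q \<bullet> n1 q = 0" "y q \<bullet> n2 q = 0" "n1 q \<bullet> n2 q = 0"
    "y q \<bullet> x q = 0" "n1 q \<bullet> x q = 0" "n2 q \<bullet> x q = 0"
    "n1 q \<bullet> y q = 0" "n2 q \<bullet> y q = 0" "n2 q \<bullet> n1 q = 0"
  using frame assms unfolding geometric_frame_def by (auto simp: inner_commute)

lemma invariants_nondegenerate:
  assumes "q \<in> U"
  shows "\<mu> q > 0" "\<nu> q \<noteq> 0" "(\<mu> q)\<^sup>2 \<noteq> (\<nu> q)\<^sup>2"
  using frame assms unfolding geometric_frame_def by auto

lemma disc_pos: "q \<in> U \<Longrightarrow> disc q > 0"
  using invariants_nondegenerate(3) by simp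

lemma first_fundamental_form:
  assumes q: "q \<in> U"
  shows "fF z q = 0" "fE z q = (conf q)\<^sup>2" "fG z q = (conf q)\<^sup>2" "conf q > 0"
proof -
  have E: "fE z q = disc q powr (-1/2)" "fG z q = fE z q"
    using canon q unfolding canonical_params_def by auto
  then have "fE z q > 0" using disc_pos[OF q] by simp
  then show "fE z q = (conf q)\<^sup>2" "fG z q = (conf q)\<^sup>2" "conf q > 0"
    using E unfolding conf_def by auto
  show "fF z q = 0" using canon q unfolding canonical_params_def semi_canonical_def by auto
qed

text \<open>In canonical parameters the conformal factor is disc^(-1/4); this is the only place where
  E = G = disc^(-1/2) enters.\<close>
lemma conf_disc:
  assumes q: "q \<in> U"
  shows "disc q powr (1/4) = 1 / conf q" "sqrt (disc q) * (conf q)\<^sup>2 = 1"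
proof -
  have W: "disc q > 0" using disc_pos[OF q] .
  have E: "(conf q)\<^sup>2 = disc q powr (-1/2)"
    using canon q first_fundamental_form(2)[OF q] unfolding canonical_params_def by auto
  have "conf q = sqrt (disc q powr (-1/2))"
    using E first_fundamental_form(4)[OF q] by (metis abs_of_pos real_sqrt_abs)
  also have "\<dots> = disc q powr (-1/4)"
    using W by (simp add: powr_half_sqrt[symmetric] powr_powr)
  finally have c: "conf q = disc q powr (-1/4)" .
  show "disc q powr (1/4) = 1 / conf q"
    unfolding c using W by (simp add: powr_minus_divide)
  have "sqrt (disc q) * (conf q)\<^sup>2 = disc q powr (1/2) * disc q powr (-1/2)"
    unfolding E using W by (simp add: powr_half_sqrt)
  also have "\<dots> = 1" using W by (simp flip: powr_add)
  finally show "sqrt (disc q) * (conf q)\<^sup>2 = 1" .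
qed

lemma z_partials:
  assumes q: "q \<in> U"
  shows "pu z q = conf q *\<^sub>R x q" "pv z q = conf q *\<^sub>R y q"
proof -
  have "x q = (1 / sqrt (fE z q)) *\<^sub>R pu z q" "y q = (1 / sqrt (fG z q)) *\<^sub>R pv z q"
    using canon q unfolding canonical_params_def semi_canonical_def by auto
  then show "pu z q = conf q *\<^sub>R x q" "pv z q = conf q *\<^sub>R y q"
    using first_fundamental_form[OF q] unfolding conf_def by auto
qed

lemma Dflat_frame:
  assumes q: "q \<in> U"
  shows "pu X q = conf q *\<^sub>R Dflat z x X q" "pv X q = conf q *\<^sub>R Dflat z y X q"
proof -
  have "tca z q (x q) = 1 / conf q" "tcb z q (x q) = 0" "tca z q (y q) = 0" "tcb z q (y q) = 1 / conf q"
    using first_fundamental_form[OF q] frame_orthonormal[OF q]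
    unfolding tca_def tcb_def z_partials[OF q] by (auto simp: power2_eq_square field_simps)
  then show "pu X q = conf q *\<^sub>R Dflat z x X q" "pv X q = conf q *\<^sub>R Dflat z y X q"
    using first_fundamental_form(4)[OF q] unfolding Dflat_def by simp_all
qed

lemma frame_partials:
  assumes q: "q \<in> U"
  shows "pu x q = conf q *\<^sub>R (\<gamma>1 q *\<^sub>R y q + \<nu> q *\<^sub>R n1 q)"
    "pv x q = conf q *\<^sub>R ((- \<gamma>2 q) *\<^sub>R y q + \<mu> q *\<^sub>R n2 q)"
    "pu y q = conf q *\<^sub>R ((- \<gamma>1 q) *\<^sub>R x q + \<mu> q *\<^sub>R n2 q)"
    "pv y q = conf q *\<^sub>R (\<gamma>2 q *\<^sub>R x q + (- \<nu> q) *\<^sub>R n1 q)"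
    "pu n1 q = conf q *\<^sub>R ((- \<nu> q) *\<^sub>R x q + \<beta>1 q *\<^sub>R n2 q)"
    "pv n1 q = conf q *\<^sub>R (\<nu> q *\<^sub>R y q + \<beta>2 q *\<^sub>R n2 q)"
    "pu n2 q = conf q *\<^sub>R ((- \<mu> q) *\<^sub>R y q + (- \<beta>1 q) *\<^sub>R n1 q)"
    "pv n2 q = conf q *\<^sub>R ((- \<mu> q) *\<^sub>R x q + (- \<beta>2 q) *\<^sub>R n1 q)"
  using frame q unfolding Dflat_frame[OF q] geometric_frame_def by auto

lemma conf_has_partials:
  assumes q: "q \<in> U"
  shows "has_pu conf (pu conf q) q" "has_pv conf (pv conf q) q"
proof -
  have conf_eq: "conf = (\<lambda>r. sqrt (pu z r \<bullet> pu z r))" unfolding conf_def fE_def by simp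
  have pos: "pu z q \<bullet> pu z q > 0"
    using first_fundamental_form[OF q] by (simp add: fE_def)
  note zu = smooth2_pu[OF smooth_z]
  show "has_pu conf (pu conf q) q"
    using has_deriv_along_sqrt[OF has_deriv_along_inner[OF smooth2_has_pu[OF zu q] smooth2_has_pu[OF zu q]]]
      pos pu_eqI unfolding conf_eq by fastforce
  show "has_pv conf (pv conf q) q"
    using has_deriv_along_sqrt[OF has_deriv_along_inner[OF smooth2_has_pv[OF zu q] smooth2_has_pv[OF zu q]]]
      pos pv_eqI unfolding conf_eq by fastforce
qed

lemma nproj_frame:
  assumes q: "q \<in> U"
  shows "nproj z q w = w - (w \<bullet> x q) *\<^sub>R x q - (w \<bullet> y q) *\<^sub>R y q"
  using first_fundamental_form[OF q]
  unfolding nproj_def tproj_def tca_def tcb_def z_partials[OF q]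
  by (simp add: power2_eq_square)

lemma conf_scaled_partials:
  assumes X: "smooth2 U X" and q: "q \<in> U"
  shows "pu (\<lambda>r. conf r *\<^sub>R X r) q = conf q *\<^sub>R pu X q + pu conf q *\<^sub>R X q"
    "pv (\<lambda>r. conf r *\<^sub>R X r) q = conf q *\<^sub>R pv X q + pv conf q *\<^sub>R X q"
  using pu_eqI[OF has_deriv_along_scaleR[OF conf_has_partials(1)[OF q] smooth2_has_pu[OF X q]]]
    pv_eqI[OF has_deriv_along_scaleR[OF conf_has_partials(2)[OF q] smooth2_has_pv[OF X q]]]
  by simp_all

lemma z_second_partials:
  assumes q: "q \<in> U"
  shows "pu (pu z) q = conf q *\<^sub>R pu x q + pu conf q *\<^sub>R x q"
    "pv (pv z) q = conf q *\<^sub>R pv y q + pv conf q *\<^sub>R y q"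
    "pv (pu z) q = conf q *\<^sub>R pv x q + pv conf q *\<^sub>R x q"
    "pu (pv z) q = conf q *\<^sub>R pu y q + pu conf q *\<^sub>R y q"
proof -
  have "pu (pu z) q = pu (\<lambda>r. conf r *\<^sub>R x r) q" "pv (pu z) q = pv (\<lambda>r. conf r *\<^sub>R x r) q"
    "pv (pv z) q = pv (\<lambda>r. conf r *\<^sub>R y r) q" "pu (pv z) q = pu (\<lambda>r. conf r *\<^sub>R y r) q"
    by (rule pu_cong_open[OF open_U q] pv_cong_open[OF open_U q], simp add: z_partials)+
  then show "pu (pu z) q = conf q *\<^sub>R pu x q + pu conf q *\<^sub>R x q"
    "pv (pv z) q = conf q *\<^sub>R pv y q + pv conf q *\<^sub>R y q"
    "pv (pu z) q = conf q *\<^sub>R pv x q + pv conf q *\<^sub>R x q"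
    "pu (pv z) q = conf q *\<^sub>R pu y q + pu conf q *\<^sub>R y q"
    by (simp_all add: conf_scaled_partials[OF smooth_frame(1) q] conf_scaled_partials[OF smooth_frame(2) q])
qed

lemma mixed_partials:
  fixes f :: "real \<times> real \<Rightarrow> 'a::real_inner"
  shows "smooth2 U f \<Longrightarrow> q \<in> U \<Longrightarrow> pv (pu f) q = pu (pv f) q"
  using smooth2_mixed_partials[OF open_U] by blast

lemma pv_of_conf_combination:
  assumes q: "q \<in> U" and X: "\<And>r. r \<in> U \<Longrightarrow> pu X r = conf r *\<^sub>R (a r *\<^sub>R A r + b r *\<^sub>R B r)"
    and a: "has_pv a a' q" and b: "has_pv b b' q" and A: "has_pv A A' q" and B: "has_pv B B' q"
  shows "pv (pu X) q = conf q *\<^sub>R (a q *\<^sub>R A' + a' *\<^sub>R A q + (b q *\<^sub>R B' + b' *\<^sub>R B q))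
                        + pv conf q *\<^sub>R (a q *\<^sub>R A q + b q *\<^sub>R B q)"
proof -
  have "pv (pu X) q = pv (\<lambda>r. conf r *\<^sub>R (a r *\<^sub>R A r + b r *\<^sub>R B r)) q"
    by (rule pv_cong_open[OF open_U q X])
  also have "\<dots> = conf q *\<^sub>R (a q *\<^sub>R A' + a' *\<^sub>R A q + (b q *\<^sub>R B' + b' *\<^sub>R B q))
                        + pv conf q *\<^sub>R (a q *\<^sub>R A q + b q *\<^sub>R B q)"
    using pv_eqI[OF has_deriv_along_scaleR[OF conf_has_partials(2)[OF q]
      has_deriv_along_add[OF has_deriv_along_scaleR[OF a A] has_deriv_along_scaleR[OF b B]]]]
    by (simp only: prod.collapse)
  finally show ?thesis .
qed

lemma pu_of_conf_combination:
  assumes q: "q \<in> U" and X: "\<And>r. r \<in> U \<Longrightarrow> pv X r = conf r *\<^sub>R (a r *\<^sub>R A r + b r *\<^sub>R B r)"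
    and a: "has_pu a a' q" and b: "has_pu b b' q" and A: "has_pu A A' q" and B: "has_pu B B' q"
  shows "pu (pv X) q = conf q *\<^sub>R (a q *\<^sub>R A' + a' *\<^sub>R A q + (b q *\<^sub>R B' + b' *\<^sub>R B q))
                        + pu conf q *\<^sub>R (a q *\<^sub>R A q + b q *\<^sub>R B q)"
proof -
  have "pu (pv X) q = pu (\<lambda>r. conf r *\<^sub>R (a r *\<^sub>R A r + b r *\<^sub>R B r)) q"
    by (rule pu_cong_open[OF open_U q X])
  also have "\<dots> = conf q *\<^sub>R (a q *\<^sub>R A' + a' *\<^sub>R A q + (b q *\<^sub>R B' + b' *\<^sub>R B q))
                        + pu conf q *\<^sub>R (a q *\<^sub>R A q + b q *\<^sub>R B q)"
    using pu_eqI[OF has_deriv_along_scaleR[OF conf_has_partials(1)[OF q]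
      has_deriv_along_add[OF has_deriv_along_scaleR[OF a A] has_deriv_along_scaleR[OF b B]]]]
    by (simp only: prod.collapse)
  finally show ?thesis .
qed

text \<open>Symmetry of z_uv = (conf x)_v = (conf y)_u determines the derivatives of the conformal factor.\<close>
lemma conf_partials:
  assumes q: "q \<in> U"
  shows "pv conf q = - (conf q)\<^sup>2 * \<gamma>1 q" "pu conf q = - (conf q)\<^sup>2 * \<gamma>2 q"
proof -
  have "pv (pu z) q \<bullet> x q = pu (pv z) q \<bullet> x q" "pv (pu z) q \<bullet> y q = pu (pv z) q \<bullet> y q"
    using mixed_partials[OF smooth_z q] by auto
  then show "pv conf q = - (conf q)\<^sup>2 * \<gamma>1 q" "pu conf q = - (conf q)\<^sup>2 * \<gamma>2 q"
    unfolding z_second_partials[OF q] frame_partials[OF q]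
    by (simp_all add: inner_add_left inner_diff_left frame_orthonormal[OF q] power2_eq_square)
qed

text \<open>Expansions of the mixed second partials of the frame fields x, y, n1 by the structure
  equations; comparing components of f_uv = f_vu gives the integrability conditions.\<close>
lemma frame_mixed_partials:
  assumes q: "q \<in> U"
  shows "pv (pu x) q = conf q *\<^sub>R (\<gamma>1 q *\<^sub>R pv y q + pv \<gamma>1 q *\<^sub>R y q + (\<nu> q *\<^sub>R pv n1 q + pv \<nu> q *\<^sub>R n1 q))
                        + pv conf q *\<^sub>R (\<gamma>1 q *\<^sub>R y q + \<nu> q *\<^sub>R n1 q)"
    "pu (pv x) q = conf q *\<^sub>R ((- \<gamma>2 q) *\<^sub>R pu y q + (- pu \<gamma>2 q) *\<^sub>R y q + (\<mu> q *\<^sub>R pu n2 q + pu \<mu> q *\<^sub>R n2 q))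
                        + pu conf q *\<^sub>R ((- \<gamma>2 q) *\<^sub>R y q + \<mu> q *\<^sub>R n2 q)"
    "pv (pu y) q = conf q *\<^sub>R ((- \<gamma>1 q) *\<^sub>R pv x q + (- pv \<gamma>1 q) *\<^sub>R x q + (\<mu> q *\<^sub>R pv n2 q + pv \<mu> q *\<^sub>R n2 q))
                        + pv conf q *\<^sub>R ((- \<gamma>1 q) *\<^sub>R x q + \<mu> q *\<^sub>R n2 q)"
    "pu (pv y) q = conf q *\<^sub>R (\<gamma>2 q *\<^sub>R pu x q + pu \<gamma>2 q *\<^sub>R x q + ((- \<nu> q) *\<^sub>R pu n1 q + (- pu \<nu> q) *\<^sub>R n1 q))
                        + pu conf q *\<^sub>R (\<gamma>2 q *\<^sub>R x q + (- \<nu> q) *\<^sub>R n1 q)"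
    "pv (pu n1) q = conf q *\<^sub>R ((- \<nu> q) *\<^sub>R pv x q + (- pv \<nu> q) *\<^sub>R x q + (\<beta>1 q *\<^sub>R pv n2 q + pv \<beta>1 q *\<^sub>R n2 q))
                        + pv conf q *\<^sub>R ((- \<nu> q) *\<^sub>R x q + \<beta>1 q *\<^sub>R n2 q)"
    "pu (pv n1) q = conf q *\<^sub>R (\<nu> q *\<^sub>R pu y q + pu \<nu> q *\<^sub>R y q + (\<beta>2 q *\<^sub>R pu n2 q + pu \<beta>2 q *\<^sub>R n2 q))
                        + pu conf q *\<^sub>R (\<nu> q *\<^sub>R y q + \<beta>2 q *\<^sub>R n2 q)"
  by (rule pv_of_conf_combination[OF q frame_partials(1)
      smooth2_has_pv[OF smooth_invariants(3) q]
      smooth2_has_pv[OF smooth_invariants(1) q]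
      smooth2_has_pv[OF smooth_frame(2) q]
      smooth2_has_pv[OF smooth_frame(3) q]]
   pu_of_conf_combination[OF q frame_partials(2)
      has_deriv_along_minus[OF smooth2_has_pu[OF smooth_invariants(4) q]]
      smooth2_has_pu[OF smooth_invariants(2) q]
      smooth2_has_pu[OF smooth_frame(2) q]
      smooth2_has_pu[OF smooth_frame(4) q]]
   pv_of_conf_combination[OF q frame_partials(3)
      has_deriv_along_minus[OF smooth2_has_pv[OF smooth_invariants(3) q]]
      smooth2_has_pv[OF smooth_invariants(2) q]
      smooth2_has_pv[OF smooth_frame(1) q]
      smooth2_has_pv[OF smooth_frame(4) q]]
   pu_of_conf_combination[OF q frame_partials(4)
      smooth2_has_pu[OF smooth_invariants(4) q]
      has_deriv_along_minus[OF smooth2_has_pu[OF smooth_invariants(1) q]]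
      smooth2_has_pu[OF smooth_frame(1) q]
      smooth2_has_pu[OF smooth_frame(3) q]]
   pv_of_conf_combination[OF q frame_partials(5)
      has_deriv_along_minus[OF smooth2_has_pv[OF smooth_invariants(1) q]]
      smooth2_has_pv[OF smooth_invariants(5) q]
      smooth2_has_pv[OF smooth_frame(1) q]
      smooth2_has_pv[OF smooth_frame(4) q]]
   pu_of_conf_combination[OF q frame_partials(6)
      smooth2_has_pu[OF smooth_invariants(1) q]
      smooth2_has_pu[OF smooth_invariants(6) q]
      smooth2_has_pu[OF smooth_frame(2) q]
      smooth2_has_pu[OF smooth_frame(4) q]] | assumption)+
    \<comment> \<open>the assumption steps close the trivial goals r \<in> U \<Longrightarrow> r \<in> U left by the instantiation\<close>

text \<open>Comparing normal components of x_uv = x_vu and y_uv = y_vu: the Codazzi equations,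
  which express the first partials of nu and mu through the other invariants.\<close>
lemma codazzi_equations:
  assumes q: "q \<in> U"
  shows "pu \<nu> q = conf q * (\<mu> q * \<beta>2 q + 2 * \<gamma>2 q * \<nu> q)"
    "pv \<nu> q = conf q * (2 * \<gamma>1 q * \<nu> q - \<mu> q * \<beta>1 q)"
    "pu \<mu> q = conf q * (\<nu> q * \<beta>2 q + 2 * \<gamma>2 q * \<mu> q)"
    "pv \<mu> q = conf q * (2 * \<gamma>1 q * \<mu> q - \<nu> q * \<beta>1 q)"
proof -
  note expand = frame_mixed_partials[OF q] frame_partials[OF q] conf_partials[OF q]
    inner_add_left inner_diff_left frame_orthonormal[OF q] power2_eq_square
  have c: "conf q \<noteq> 0" using first_fundamental_form(4)[OF q] by simp
  have "pv (pu y) q \<bullet> n1 q = pu (pv y) q \<bullet> n1 q" "pv (pu x) q \<bullet> n1 q = pu (pv x) q \<bullet> n1 q"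
    "pv (pu x) q \<bullet> n2 q = pu (pv x) q \<bullet> n2 q" "pv (pu y) q \<bullet> n2 q = pu (pv y) q \<bullet> n2 q"
    using mixed_partials[OF smooth_frame(1) q] mixed_partials[OF smooth_frame(2) q] by simp_all
  then have "conf q * (pu \<nu> q - conf q * (\<mu> q * \<beta>2 q + 2 * \<gamma>2 q * \<nu> q)) = 0"
    "conf q * (pv \<nu> q - conf q * (2 * \<gamma>1 q * \<nu> q - \<mu> q * \<beta>1 q)) = 0"
    "conf q * (pu \<mu> q - conf q * (\<nu> q * \<beta>2 q + 2 * \<gamma>2 q * \<mu> q)) = 0"
    "conf q * (pv \<mu> q - conf q * (2 * \<gamma>1 q * \<mu> q - \<nu> q * \<beta>1 q)) = 0"
    by (simp_all add: expand) algebra+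
  then show "pu \<nu> q = conf q * (\<mu> q * \<beta>2 q + 2 * \<gamma>2 q * \<nu> q)"
    "pv \<nu> q = conf q * (2 * \<gamma>1 q * \<nu> q - \<mu> q * \<beta>1 q)"
    "pu \<mu> q = conf q * (\<nu> q * \<beta>2 q + 2 * \<gamma>2 q * \<mu> q)"
    "pv \<mu> q = conf q * (2 * \<gamma>1 q * \<mu> q - \<nu> q * \<beta>1 q)"
    using c by simp_all
qed

text \<open>The tangential component of x_uv = x_vu: the Gauss equation
  (conf gamma2)_u + (conf gamma1)_v = K conf^2 with K = -(nu^2 + mu^2).\<close>
lemma gauss_equation:
  assumes q: "q \<in> U"
  shows "pu conf q * \<gamma>2 q + conf q * pu \<gamma>2 q + (pv conf q * \<gamma>1 q + conf q * pv \<gamma>1 q)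
           = - (conf q)\<^sup>2 * ((\<nu> q)\<^sup>2 + (\<mu> q)\<^sup>2)"
proof -
  have "pv (pu x) q \<bullet> y q = pu (pv x) q \<bullet> y q"
    using mixed_partials[OF smooth_frame(1) q] by simp
  then show ?thesis
    by (simp add: frame_mixed_partials[OF q] frame_partials[OF q] conf_partials[OF q]
        inner_add_left inner_diff_left frame_orthonormal[OF q] power2_eq_square) algebra
qed

text \<open>The n2-component of n1_uv = n1_vu: the Ricci equation
  (conf beta2)_u - (conf beta1)_v = - kappa conf^2 with kappa = 2 nu mu.\<close>
lemma ricci_equation:
  assumes q: "q \<in> U"
  shows "pu conf q * \<beta>2 q + conf q * pu \<beta>2 q - (pv conf q * \<beta>1 q + conf q * pv \<beta>1 q)
           = - 2 * (conf q)\<^sup>2 * \<nu> q * \<mu> q"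
proof -
  have "pv (pu n1) q \<bullet> n2 q = pu (pv n1) q \<bullet> n2 q"
    using mixed_partials[OF smooth_frame(3) q] by simp
  then show ?thesis
    by (simp add: frame_mixed_partials[OF q] frame_partials[OF q] conf_partials[OF q]
        inner_add_left inner_diff_left frame_orthonormal[OF q] power2_eq_square) algebra
qed

lemma gauss_curvature:
  assumes q: "q \<in> U"
  shows "gauss_curv z q = - ((\<nu> q)\<^sup>2 + (\<mu> q)\<^sup>2)"
proof -
  have c: "conf q \<noteq> 0" using first_fundamental_form(4)[OF q] by simp
  show ?thesis
    unfolding gauss_curv_def first_fundamental_form[OF q] nproj_frame[OF q] z_second_partials[OF q]
    using c by (simp add: frame_partials[OF q] inner_add_left inner_diff_left inner_add_right
        inner_diff_right frame_orthonormal[OF q] power2_eq_square conf_partials[OF q] field_simps)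
qed

lemma normal_connection_n2:
  assumes q: "q \<in> U"
  shows "Dnu z n2 q = (- (conf q * \<beta>1 q)) *\<^sub>R n1 q" "Dnv z n2 q = (- (conf q * \<beta>2 q)) *\<^sub>R n1 q"
  unfolding Dnu_def Dnv_def nproj_frame[OF q]
  by (simp_all add: frame_partials[OF q] inner_add_left inner_diff_left frame_orthonormal[OF q] algebra_simps)

lemma normal_curvature:
  assumes q: "q \<in> U"
  shows "normal_curv z n1 n2 q = 2 * \<nu> q * \<mu> q"
proof -
  have c: "conf q > 0" using first_fundamental_form(4)[OF q] .
  have area: "sqrt (fE z q * fG z q - (fF z q)\<^sup>2) = (conf q)\<^sup>2"
    unfolding first_fundamental_form[OF q] by (simp add: power2_eq_square real_sqrt_mult)
  have "pu (Dnv z n2) q = pu (\<lambda>r. (- (conf r * \<beta>2 r)) *\<^sub>R n1 r) q"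
    by (rule pu_cong_open[OF open_U q]) (simp add: normal_connection_n2)
  also have "\<dots> = (- (conf q * \<beta>2 q)) *\<^sub>R pu n1 q + (- (conf q * pu \<beta>2 q + pu conf q * \<beta>2 q)) *\<^sub>R n1 q"
    using pu_eqI[OF has_deriv_along_scaleR[OF has_deriv_along_minus[OF has_deriv_along_mult[OF
          conf_has_partials(1)[OF q] smooth2_has_pu[OF smooth_invariants(6) q]]] smooth2_has_pu[OF smooth_frame(3) q]]]
    by simp
  finally have uv: "pu (Dnv z n2) q = \<dots>" .
  have "pv (Dnu z n2) q = pv (\<lambda>r. (- (conf r * \<beta>1 r)) *\<^sub>R n1 r) q"
    by (rule pv_cong_open[OF open_U q]) (simp add: normal_connection_n2)
  also have "\<dots> = (- (conf q * \<beta>1 q)) *\<^sub>R pv n1 q + (- (conf q * pv \<beta>1 q + pv conf q * \<beta>1 q)) *\<^sub>R n1 q"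
    using pv_eqI[OF has_deriv_along_scaleR[OF has_deriv_along_minus[OF has_deriv_along_mult[OF
          conf_has_partials(2)[OF q] smooth2_has_pv[OF smooth_invariants(5) q]]] smooth2_has_pv[OF smooth_frame(3) q]]]
    by simp
  finally have vu: "pv (Dnu z n2) q = \<dots>" .
  have "(Dnu z (Dnv z n2) q - Dnv z (Dnu z n2) q) \<bullet> n1 q = 2 * (conf q)\<^sup>2 * \<nu> q * \<mu> q"
    unfolding Dnu_def[of z "Dnv z n2" q] Dnv_def[of z "Dnu z n2" q] uv vu nproj_frame[OF q]
    using ricci_equation[OF q]
    by (simp add: frame_partials[OF q] inner_add_left inner_diff_left frame_orthonormal[OF q] algebra_simps)
  then show ?thesis unfolding normal_curv_def area using c by simp
qed

text \<open>gamma1, gamma2 are the partials of disc^(1/4) = 1/conf.\<close>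
lemma gamma_from_disc:
  assumes q: "q \<in> U"
  shows "\<gamma>1 q = pv (\<lambda>r. disc r powr (1/4)) q" "\<gamma>2 q = pu (\<lambda>r. disc r powr (1/4)) q"
proof -
  have c: "conf q \<noteq> 0" using first_fundamental_form(4)[OF q] by simp
  have "pv (\<lambda>r. disc r powr (1/4)) q = pv (\<lambda>r. 1 / conf r) q"
    by (rule pv_cong_open[OF open_U q]) (simp add: conf_disc)
  also have "\<dots> = \<gamma>1 q"
    using pv_eqI[OF has_deriv_along_inverse[OF conf_has_partials(2)[OF q]]] c
    by (simp add: conf_partials[OF q])
  finally show "\<gamma>1 q = pv (\<lambda>r. disc r powr (1/4)) q" ..
  have "pu (\<lambda>r. disc r powr (1/4)) q = pu (\<lambda>r. 1 / conf r) q"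
    by (rule pu_cong_open[OF open_U q]) (simp add: conf_disc)
  also have "\<dots> = \<gamma>2 q"
    using pu_eqI[OF has_deriv_along_inverse[OF conf_has_partials(1)[OF q]]] c
    by (simp add: conf_partials[OF q])
  finally show "\<gamma>2 q = pu (\<lambda>r. disc r powr (1/4)) q" ..
qed

text \<open>By the Codazzi equations, (ln disc)_u = 4 conf gamma2 and (ln disc)_v = 4 conf gamma1.\<close>
lemma ln_disc_partials:
  assumes q: "q \<in> U"
  shows "has_pu (\<lambda>r. ln (disc r)) (4 * (conf q * \<gamma>2 q)) q"
    "has_pv (\<lambda>r. ln (disc r)) (4 * (conf q * \<gamma>1 q)) q"
proof -
  have d: "(\<mu> q)\<^sup>2 - (\<nu> q)\<^sup>2 \<noteq> 0" using invariants_nondegenerate(3)[OF q] by simp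
  have "2 * (\<mu> q * pu \<mu> q - \<nu> q * pu \<nu> q) / ((\<mu> q)\<^sup>2 - (\<nu> q)\<^sup>2) = 4 * (conf q * \<gamma>2 q)"
    "2 * (\<mu> q * pv \<mu> q - \<nu> q * pv \<nu> q) / ((\<mu> q)\<^sup>2 - (\<nu> q)\<^sup>2) = 4 * (conf q * \<gamma>1 q)"
    using d by (simp_all add: codazzi_equations[OF q] field_simps power2_eq_square)
  then show "has_pu (\<lambda>r. ln (disc r)) (4 * (conf q * \<gamma>2 q)) q"
    "has_pv (\<lambda>r. ln (disc r)) (4 * (conf q * \<gamma>1 q)) q"
    using has_deriv_along_ln_diff_squares[OF smooth2_has_pu[OF smooth_invariants(2) q]
        smooth2_has_pu[OF smooth_invariants(1) q]]
      has_deriv_along_ln_diff_squares[OF smooth2_has_pv[OF smooth_invariants(2) q]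
        smooth2_has_pv[OF smooth_invariants(1) q]]
      invariants_nondegenerate(3)[OF q] by simp_all
qed

text \<open>By the Codazzi equations, (ln |ratio|)_u = 2 conf beta2 and (ln |ratio|)_v = -2 conf beta1.\<close>
lemma ln_ratio_partials:
  assumes q: "q \<in> U"
  shows "has_pu (\<lambda>r. ln \<bar>ratio r\<bar>) (2 * (conf q * \<beta>2 q)) q"
    "has_pv (\<lambda>r. ln \<bar>ratio r\<bar>) (- 2 * (conf q * \<beta>1 q)) q"
proof -
  have d: "(\<mu> q)\<^sup>2 - (\<nu> q)\<^sup>2 \<noteq> 0" using invariants_nondegenerate(3)[OF q] by simp
  have "2 * (pu \<nu> q * \<mu> q - pu \<mu> q * \<nu> q) / ((\<mu> q)\<^sup>2 - (\<nu> q)\<^sup>2) = 2 * (conf q * \<beta>2 q)"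
    "2 * (pv \<nu> q * \<mu> q - pv \<mu> q * \<nu> q) / ((\<mu> q)\<^sup>2 - (\<nu> q)\<^sup>2) = - 2 * (conf q * \<beta>1 q)"
    using d by (simp_all add: codazzi_equations[OF q] field_simps power2_eq_square)
  then show "has_pu (\<lambda>r. ln \<bar>ratio r\<bar>) (2 * (conf q * \<beta>2 q)) q"
    "has_pv (\<lambda>r. ln \<bar>ratio r\<bar>) (- 2 * (conf q * \<beta>1 q)) q"
    using has_deriv_along_ln_ratio[OF smooth2_has_pu[OF smooth_invariants(2) q]
        smooth2_has_pu[OF smooth_invariants(1) q]]
      has_deriv_along_ln_ratio[OF smooth2_has_pv[OF smooth_invariants(2) q]
        smooth2_has_pv[OF smooth_invariants(1) q]]
      invariants_nondegenerate(3)[OF q] by simp_all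
qed

lemma partials_of_multiple:
  fixes f g :: "real \<times> real \<Rightarrow> real"
  assumes q: "q \<in> U" and f: "\<And>r. r \<in> U \<Longrightarrow> f r = k * g r"
  shows "has_pu g d q \<Longrightarrow> pu f q = k * d" "has_pv g d q \<Longrightarrow> pv f q = k * d"
proof -
  have eq: "pu f q = pu (\<lambda>r. k * g r) q" "pv f q = pv (\<lambda>r. k * g r) q"
    by (rule pu_cong_open[OF open_U q] pv_cong_open[OF open_U q], fact f)+
  show "pu f q = k * d" if "has_pu g d q"
    using eq(1) pu_eqI[OF has_deriv_along_mult[OF has_deriv_along_const that]] by simp
  show "pv f q = k * d" if "has_pv g d q"
    using eq(2) pv_eqI[OF has_deriv_along_mult[OF has_deriv_along_const that]] by simp
qed

lemma lap_of_conf_products: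
  fixes f :: "real \<times> real \<Rightarrow> real"
  assumes p: "p \<in> U"
    and fu: "\<And>r. r \<in> U \<Longrightarrow> pu f r = ku * (conf r * hu r)" and hu: "smooth2 U hu"
    and fv: "\<And>r. r \<in> U \<Longrightarrow> pv f r = kv * (conf r * hv r)" and hv: "smooth2 U hv"
  shows "lap f p = ku * (pu conf p * hu p + conf p * pu hu p) + kv * (pv conf p * hv p + conf p * pv hv p)"
proof -
  have "pu (pu f) p = ku * (pu conf p * hu p + conf p * pu hu p)"
    using partials_of_multiple(1)[OF p fu
        has_deriv_along_mult[OF conf_has_partials(1)[OF p] smooth2_has_pu[OF hu p]]]
    by (simp add: algebra_simps)
  moreover have "pv (pv f) p = kv * (pv conf p * hv p + conf p * pv hv p)"
    using partials_of_multiple(2)[OF p fv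
        has_deriv_along_mult[OF conf_has_partials(2)[OF p] smooth2_has_pv[OF hv p]]]
    by (simp add: algebra_simps)
  ultimately show ?thesis unfolding lap_def by simp
qed

lemma beta_from_ratio:
  assumes p: "p \<in> U"
  shows "\<beta>1 p = - (disc p powr (1/4)) * pv (\<lambda>q. ln (sqrt \<bar>ratio q\<bar>)) p"
    "\<beta>2 p = disc p powr (1/4) * pu (\<lambda>q. ln (sqrt \<bar>ratio q\<bar>)) p"
proof -
  have c: "conf p \<noteq> 0" using first_fundamental_form(4)[OF p] by simp
  have half: "ln (sqrt \<bar>ratio q\<bar>) = 1/2 * ln \<bar>ratio q\<bar>" for q by (simp add: ln_sqrt)
  have "pv (\<lambda>q. ln (sqrt \<bar>ratio q\<bar>)) p = 1/2 * (- 2 * (conf p * \<beta>1 p))"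
    "pu (\<lambda>q. ln (sqrt \<bar>ratio q\<bar>)) p = 1/2 * (2 * (conf p * \<beta>2 p))"
    using partials_of_multiple(2)[OF p half ln_ratio_partials(2)[OF p]]
      partials_of_multiple(1)[OF p half ln_ratio_partials(1)[OF p]] by simp_all
  then show "\<beta>1 p = - (disc p powr (1/4)) * pv (\<lambda>q. ln (sqrt \<bar>ratio q\<bar>)) p"
    "\<beta>2 p = disc p powr (1/4) * pu (\<lambda>q. ln (sqrt \<bar>ratio q\<bar>)) p"
    using c by (simp_all add: conf_disc(1)[OF p])
qed

text \<open>The Gauss equation as a Laplacian: Delta ln disc = 4 K conf^2.\<close>
lemma laplace_ln_disc:
  assumes p: "p \<in> U"
  shows "lap (\<lambda>q. ln (disc q)) p = - 4 * (conf p)\<^sup>2 * ((\<nu> p)\<^sup>2 + (\<mu> p)\<^sup>2)"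
  using lap_of_conf_products[OF p pu_eqI[OF ln_disc_partials(1)] smooth_invariants(4)
      pv_eqI[OF ln_disc_partials(2)] smooth_invariants(3)] gauss_equation[OF p]
  by (simp add: algebra_simps)

text \<open>The Ricci equation as a Laplacian: Delta ln |ratio| = - 2 kappa conf^2.\<close>
lemma laplace_ln_ratio:
  assumes p: "p \<in> U"
  shows "lap (\<lambda>q. ln \<bar>ratio q\<bar>) p = - 4 * (conf p)\<^sup>2 * \<nu> p * \<mu> p"
  using lap_of_conf_products[OF p pu_eqI[OF ln_ratio_partials(1)] smooth_invariants(6)
      pv_eqI[OF ln_ratio_partials(2)] smooth_invariants(5)] ricci_equation[OF p]
  by (simp add: algebra_simps)

text \<open>The two equations satisfied by the invariants, using sqrt disc conf^2 = 1.\<close>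
lemma disc_equation:
  assumes p: "p \<in> U"
  shows "1/4 * sqrt (disc p) * lap (\<lambda>q. ln (disc q)) p + (\<nu> p)\<^sup>2 + (\<mu> p)\<^sup>2 = 0"
  using conf_disc(2)[OF p] unfolding laplace_ln_disc[OF p] by algebra

lemma ratio_equation:
  assumes p: "p \<in> U"
  shows "1/2 * sqrt (disc p) * lap (\<lambda>q. ln \<bar>ratio q\<bar>) p + 2 * \<nu> p * \<mu> p = 0"
  using conf_disc(2)[OF p] unfolding laplace_ln_ratio[OF p] by algebra

text \<open>K^2 - kappa^2 = disc^2 and (K - kappa)/(K + kappa) = ratio^2, so the curvature forms of the
  two equations are twice the invariant forms.\<close>
lemma curvature_logs:
  assumes q: "q \<in> U"
  shows "ln ((gauss_curv z q)\<^sup>2 - (normal_curv z n1 n2 q)\<^sup>2) = 2 * ln (disc q)"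
    "ln ((gauss_curv z q - normal_curv z n1 n2 q) / (gauss_curv z q + normal_curv z n1 n2 q))
       = 2 * ln \<bar>ratio q\<bar>"
    "((gauss_curv z q)\<^sup>2 - (normal_curv z n1 n2 q)\<^sup>2) powr (1/4) = sqrt (disc q)"
proof -
  have KK: "(gauss_curv z q)\<^sup>2 - (normal_curv z n1 n2 q)\<^sup>2 = disc q ^ 2"
    unfolding gauss_curvature[OF q] normal_curvature[OF q] by (simp add: power2_eq_square algebra_simps)
  have "gauss_curv z q - normal_curv z n1 n2 q = - (\<mu> q + \<nu> q)\<^sup>2"
    "gauss_curv z q + normal_curv z n1 n2 q = - (\<mu> q - \<nu> q)\<^sup>2"
    unfolding gauss_curvature[OF q] normal_curvature[OF q] by (simp_all add: power2_eq_square algebra_simps)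
  then have KR: "(gauss_curv z q - normal_curv z n1 n2 q) / (gauss_curv z q + normal_curv z n1 n2 q)
      = \<bar>ratio q\<bar> ^ 2"
    by (simp add: power_divide)
  show "ln ((gauss_curv z q)\<^sup>2 - (normal_curv z n1 n2 q)\<^sup>2) = 2 * ln (disc q)"
    unfolding KK using ln_realpow[of "disc q" 2] by (simp only: of_nat_numeral)
  have "ratio q \<noteq> 0"
    using invariants_nondegenerate(3)[OF q] by (auto simp: power2_eq_square add_eq_0_iff)
  then show "ln ((gauss_curv z q - normal_curv z n1 n2 q) / (gauss_curv z q + normal_curv z n1 n2 q))
       = 2 * ln \<bar>ratio q\<bar>"
    unfolding KR by (simp add: ln_realpow)
  define w where "w = disc q"
  have w: "w > 0" using disc_pos[OF q] unfolding w_def .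
  have "(w ^ 2) powr (1/4) = (w powr 2) powr (1/4)" using powr_realpow[OF w, of 2] by simp
  also have "\<dots> = w powr (2 * (1/4))" by (rule powr_powr)
  also have "\<dots> = sqrt w" using w by (simp add: powr_half_sqrt)
  finally show "((gauss_curv z q)\<^sup>2 - (normal_curv z n1 n2 q)\<^sup>2) powr (1/4) = sqrt (disc q)"
    unfolding KK w_def .
qed

lemma gauss_curvature_equation:
  assumes p: "p \<in> U"
  shows "1/8 * ((gauss_curv z p)\<^sup>2 - (normal_curv z n1 n2 p)\<^sup>2) powr (1/4)
           * lap (\<lambda>q. ln ((gauss_curv z q)\<^sup>2 - (normal_curv z n1 n2 q)\<^sup>2)) p - gauss_curv z p = 0"
proof -
  have "lap (\<lambda>q. ln ((gauss_curv z q)\<^sup>2 - (normal_curv z n1 n2 q)\<^sup>2)) p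
        = 8 * (pu conf p * \<gamma>2 p + conf p * pu \<gamma>2 p) + 8 * (pv conf p * \<gamma>1 p + conf p * pv \<gamma>1 p)"
    using partials_of_multiple(1)[OF _ curvature_logs(1) ln_disc_partials(1)]
      partials_of_multiple(2)[OF _ curvature_logs(1) ln_disc_partials(2)]
    by (intro lap_of_conf_products[OF p _ smooth_invariants(4) _ smooth_invariants(3)]) simp_all
  then show ?thesis
    using gauss_equation[OF p] conf_disc(2)[OF p]
    unfolding curvature_logs(3)[OF p] unfolding gauss_curvature[OF p] by algebra
qed

lemma normal_curvature_equation:
  assumes p: "p \<in> U"
  shows "1/4 * ((gauss_curv z p)\<^sup>2 - (normal_curv z n1 n2 p)\<^sup>2) powr (1/4)
           * lap (\<lambda>q. ln ((gauss_curv z q - normal_curv z n1 n2 q) / (gauss_curv z q + normal_curv z n1 n2 q))) p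
           + normal_curv z n1 n2 p = 0"
proof -
  have "lap (\<lambda>q. ln ((gauss_curv z q - normal_curv z n1 n2 q) / (gauss_curv z q + normal_curv z n1 n2 q))) p
        = 4 * (pu conf p * \<beta>2 p + conf p * pu \<beta>2 p) + (- 4) * (pv conf p * \<beta>1 p + conf p * pv \<beta>1 p)"
    using partials_of_multiple(1)[OF _ curvature_logs(2) ln_ratio_partials(1)]
      partials_of_multiple(2)[OF _ curvature_logs(2) ln_ratio_partials(2)]
    by (intro lap_of_conf_products[OF p _ smooth_invariants(6) _ smooth_invariants(5)]) simp_all
  then show ?thesis
    using ricci_equation[OF p] conf_disc(2)[OF p]
    unfolding curvature_logs(3)[OF p] unfolding normal_curvature[OF p] by algebra
qed

end

theorem mainTheorem9:
  fixes U :: "(real \<times> real) set"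
    and z x y n1 n2 :: "real \<times> real \<Rightarrow> real^4"
    and \<nu> \<mu> \<gamma>1 \<gamma>2 \<beta>1 \<beta>2 :: "real \<times> real \<Rightarrow> real"
  assumes surf: "regular_surface U z"
    and frame: "geometric_frame U z x y n1 n2 \<nu> \<mu> \<gamma>1 \<gamma>2 \<beta>1 \<beta>2"
    and strongly_regular: "\<forall>p\<in>U. \<gamma>1 p * \<gamma>2 p \<noteq> 0"
    and canon: "canonical_params U z x y \<nu> \<mu>"
  shows "\<forall>p\<in>U.
     \<gamma>1 p = pv (\<lambda>q. \<bar>(\<mu> q)\<^sup>2 - (\<nu> q)\<^sup>2\<bar> powr (1/4)) p \<and>
     \<gamma>2 p = pu (\<lambda>q. \<bar>(\<mu> q)\<^sup>2 - (\<nu> q)\<^sup>2\<bar> powr (1/4)) p \<and>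
     \<beta>1 p = - (\<bar>(\<mu> p)\<^sup>2 - (\<nu> p)\<^sup>2\<bar> powr (1/4)) *
              pv (\<lambda>q. ln (sqrt \<bar>(\<mu> q + \<nu> q) / (\<mu> q - \<nu> q)\<bar>)) p \<and>
     \<beta>2 p = \<bar>(\<mu> p)\<^sup>2 - (\<nu> p)\<^sup>2\<bar> powr (1/4) *
              pu (\<lambda>q. ln (sqrt \<bar>(\<mu> q + \<nu> q) / (\<mu> q - \<nu> q)\<bar>)) p \<and>
     1/4 * sqrt \<bar>(\<mu> p)\<^sup>2 - (\<nu> p)\<^sup>2\<bar> * lap (\<lambda>q. ln \<bar>(\<mu> q)\<^sup>2 - (\<nu> q)\<^sup>2\<bar>) p
        + (\<nu> p)\<^sup>2 + (\<mu> p)\<^sup>2 = 0 \<and>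
     1/2 * sqrt \<bar>(\<mu> p)\<^sup>2 - (\<nu> p)\<^sup>2\<bar> * lap (\<lambda>q. ln \<bar>(\<mu> q + \<nu> q) / (\<mu> q - \<nu> q)\<bar>) p
        + 2 * \<nu> p * \<mu> p = 0 \<and>
     1/8 * ((gauss_curv z p)\<^sup>2 - (normal_curv z n1 n2 p)\<^sup>2) powr (1/4)
        * lap (\<lambda>q. ln ((gauss_curv z q)\<^sup>2 - (normal_curv z n1 n2 q)\<^sup>2)) p
        - gauss_curv z p = 0 \<and>
     1/4 * ((gauss_curv z p)\<^sup>2 - (normal_curv z n1 n2 p)\<^sup>2) powr (1/4)
        * lap (\<lambda>q. ln ((gauss_curv z q - normal_curv z n1 n2 q) / (gauss_curv z q + normal_curv z n1 n2 q))) p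
        + normal_curv z n1 n2 p = 0"
proof -
  interpret canonical_minimal_surface U z x y n1 n2 \<nu> \<mu> \<gamma>1 \<gamma>2 \<beta>1 \<beta>2
    using surf frame canon by unfold_locales
  show ?thesis
    using gamma_from_disc beta_from_ratio disc_equation ratio_equation
      gauss_curvature_equation normal_curvature_equation
    by blast
qed

end
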